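(* Let $t$ and $l$ be positive integers with $l\ge 6$. There exists $k_0=k_0(t,l)$ such that for every $k\ge k_0$, whenever the edge set of $\widetilde O_{k+1}$ is partitioned into $t$ parts, the subgraph formed by one of the parts contains a cycle of length $2l$.
   Context: For positive integers $n\ge k+1$, the doubled Johnson graph $J(n;k,k+1)$ is the bipartite graph with vertex set $\binom{[n]}{k}\cup\binom{[n]}{k+1}$ (subsets of $[n]=\{1,\dots,n\}$), where two vertices $u,v$ are adjacent iff $u\subset v$ or $v\subset u$. The doubled Odd graph is $\widetilde O_{k+1}=J(2k+1;k,k+1)$. *)

theory Defs
  imports Main
begin

definition dj_vertices :: "nat \<Rightarrow> nat \<Rightarrow> nat set set" where
  "dj_vertices n k = {A. A \<subseteq> {1..n} \<and> (card A = k \<or> card A = k + 1)}"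

definition dj_edges :: "nat \<Rightarrow> nat \<Rightarrow> nat set set set" where
  "dj_edges n k = {{A, B} | A B. A \<subseteq> {1..n} \<and> B \<subseteq> {1..n} \<and>
                      card A = k \<and> card B = k + 1 \<and> A \<subset> B}"

text \<open>Doubled Odd graph O~_{k+1} = J(2k+1;k,k+1).\<close>
definition doubled_odd_edges :: "nat \<Rightarrow> nat set set set" where
  "doubled_odd_edges k = dj_edges (2 * k + 1) k"

definition has_cycle_of_length :: "'a set set \<Rightarrow> nat \<Rightarrow> bool" where
  "has_cycle_of_length F m \<longleftrightarrow> m \<ge> 3 \<and>
     (\<exists>vs. length vs = m \<and> distinct vs \<and>
        (\<forall>i<m. {vs ! i, vs ! ((i + 1) mod m)} \<in> F))"

end

theory Submission
  imports Defs "HOL-Library.Ramsey" "HOL-Library.FuncSet"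
begin

text \<open>
  The incidence graph of the complete tripartite 3-uniform hypergraph, whose vertices are the
  triples and the pairs of coordinates they contain, has cycles of every length \<open>2 * l\<close> with
  \<open>l \<ge> 6\<close> on coordinates below \<open>l\<close>. To find one in a colour class of \<open>O~_{k+1}\<close>, pad every
  \<open>s\<close>-subset \<open>Y\<close> of \<open>{..<N}\<close>, \<open>s = 2 * t + 1\<close>, by a fixed set to a \<open>(k + 1)\<close>-set and colour
  \<open>Y\<close> by the \<open>s\<close> colours of the edges that delete its \<open>r\<close>-th smallest element. Ramsey's
  theorem yields a set \<open>H\<close> of size \<open>s * l\<close> on which this colour vector is constant, and by
  pigeonhole three positions \<open>r1, r2, r3\<close> carry the same colour \<open>j\<close>. Cutting \<open>H\<close> into \<open>s\<close>
  blocks of \<open>l\<close> consecutive elements and letting the blocks \<open>r1, r2, r3\<close> supply the three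
  coordinates embeds the incidence graph into colour class \<open>j\<close>.
\<close>

lemma has_cycle_of_lengthI:
  assumes "3 \<le> m" and "inj_on g {..<m}" and "\<And>i. i < m \<Longrightarrow> {g i, g (Suc i mod m)} \<in> G"
  shows "has_cycle_of_length G m"
  unfolding has_cycle_of_length_def
proof (intro conjI exI[of _ "map g [0..<m]"])
  show "distinct (map g [0..<m])"
    using assms(2) by (simp add: distinct_map atLeast0LessThan)
  show "\<forall>i<m. {map g [0..<m] ! i, map g [0..<m] ! ((i + 1) mod m)} \<in> G"
    using assms(1,3) by simp
qed (use assms in auto)

section \<open>The incidence graph of the complete tripartite 3-uniform hypergraph\<close>

datatype tri_vertex = Triple nat nat nat | Pair01 nat nat | Pair02 nat nat | Pair12 nat nat

fun tri_points :: "tri_vertex \<Rightarrow> (nat \<times> nat) set" where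
  "tri_points (Triple x y w) = {(0, x), (1, y), (2, w)}"
| "tri_points (Pair01 x y) = {(0, x), (1, y)}"
| "tri_points (Pair02 x w) = {(0, x), (2, w)}"
| "tri_points (Pair12 y w) = {(1, y), (2, w)}"

lemma tri_points_eqD:
  assumes "tri_points u = tri_points v"
  shows "u = v"
proof -
  have Image_insert: "insert (a, b) R `` {i} = (if a = i then insert b (R `` {i}) else R `` {i})"
    for a b i and R :: "(nat \<times> nat) set"
    by auto
  have "tri_points u `` {i} = tri_points v `` {i}" for i
    using assms by simp
  from this[of 0] this[of 1] this[of 2] show "u = v"
    by (cases u; cases v) (simp_all add: Image_insert)
qed

fun tri_adj :: "tri_vertex \<Rightarrow> tri_vertex \<Rightarrow> bool" where
  "tri_adj (Triple x y w) (Pair01 a b) \<longleftrightarrow> a = x \<and> b = y"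
| "tri_adj (Triple x y w) (Pair02 a c) \<longleftrightarrow> a = x \<and> c = w"
| "tri_adj (Triple x y w) (Pair12 b c) \<longleftrightarrow> b = y \<and> c = w"
| "tri_adj (Pair01 a b) (Triple x y w) \<longleftrightarrow> a = x \<and> b = y"
| "tri_adj (Pair02 a c) (Triple x y w) \<longleftrightarrow> a = x \<and> c = w"
| "tri_adj (Pair12 b c) (Triple x y w) \<longleftrightarrow> b = y \<and> c = w"
| "tri_adj _ _ \<longleftrightarrow> False"

lemma tri_adj_points:
  assumes "tri_adj u v"
  obtains x y w pt where "pt \<in> tri_points (Triple x y w)"
    and "{tri_points u, tri_points v} = {tri_points (Triple x y w), tri_points (Triple x y w) - {pt}}"
proof -
  from assms obtain x y w where uv: "(u = Triple x y w \<and> v \<in> {Pair01 x y, Pair02 x w, Pair12 y w})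
      \<or> (v = Triple x y w \<and> u \<in> {Pair01 x y, Pair02 x w, Pair12 y w})"
    by (cases u; cases v) auto
  have "tri_points (Pair01 x y) = tri_points (Triple x y w) - {(2, w)}"
    and "tri_points (Pair02 x w) = tri_points (Triple x y w) - {(1, y)}"
    and "tri_points (Pair12 y w) = tri_points (Triple x y w) - {(0, x)}"
    by auto
  then consider "{tri_points u, tri_points v} = {tri_points (Triple x y w), tri_points (Triple x y w) - {(2, w)}}"
    | "{tri_points u, tri_points v} = {tri_points (Triple x y w), tri_points (Triple x y w) - {(1, y)}}"
    | "{tri_points u, tri_points v} = {tri_points (Triple x y w), tri_points (Triple x y w) - {(0, x)}}"
    using uv by (elim disjE conjE insertE emptyE) (simp_all only: insert_commute)
  then show thesis
    using that[of "(2, w)" x y w] that[of "(1, y)" x y w] that[of "(0, x)" x y w] by cases auto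
qed

definition zig :: "nat \<Rightarrow> nat" where
  "zig j = (if even j then j else j - 1)"

definition zag :: "nat \<Rightarrow> nat" where
  "zag j = (if even j then j - 1 else j)"

definition zigzag_pair :: "nat \<Rightarrow> tri_vertex" where
  "zigzag_pair j = (if even j then Pair02 j 0 else Pair12 j 0)"

text \<open>For \<open>p \<ge> 3\<close>, \<open>tri_cycle p\<close> enumerates a cycle of length \<open>2 * p + 6\<close>. It zigzags through
  the triples \<open>Triple (zig j) (zag j) 0\<close>, whose first two coordinates are \<open>j - 1\<close> and \<open>j\<close>, for
  \<open>j = 1, \<dots>, p\<close> and returns through the layer with third coordinate \<open>1\<close>:
  \<open>Pair01 0 1, Triple 0 1 0, Pair12 1 0, Triple 2 1 0, Pair02 2 0, Triple 2 3 0, \<dots>,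
   Triple (zig p) (zag p) 0, Pair01 (zig p) (zag p), Triple (zig p) (zag p) 1, Pair02 (zig p) 1,
   Triple (zig p) 1 1, Pair12 1 1, Triple 0 1 1\<close>.\<close>

definition tri_cycle :: "nat \<Rightarrow> nat \<Rightarrow> tri_vertex" where
  "tri_cycle p i =
    (if i = 0 then Pair01 0 1
     else if i < 2 * p then
       (if odd i then Triple (zig ((i + 1) div 2)) (zag ((i + 1) div 2)) 0 else zigzag_pair (i div 2))
     else if i = 2 * p then Pair01 (zig p) (zag p)
     else if i = 2 * p + 1 then Triple (zig p) (zag p) 1
     else if i = 2 * p + 2 then Pair02 (zig p) 1
     else if i = 2 * p + 3 then Triple (zig p) 1 1
     else if i = 2 * p + 4 then Pair12 1 1
     else Triple 0 1 1)"

fun tri_cycle_index :: "nat \<Rightarrow> tri_vertex \<Rightarrow> nat" where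
  "tri_cycle_index p (Pair01 x y) = (if x = 0 \<and> y = 1 then 0 else 2 * p)"
| "tri_cycle_index p (Triple x y w) =
     (if w = 0 then 2 * max x y - 1 else if y = 1 then (if x = 0 then 2 * p + 5 else 2 * p + 3) else 2 * p + 1)"
| "tri_cycle_index p (Pair02 x w) = (if w = 0 then 2 * x else 2 * p + 2)"
| "tri_cycle_index p (Pair12 y w) = (if w = 0 then 2 * y else 2 * p + 4)"

lemma max_zig_zag: "1 \<le> j \<Longrightarrow> max (zig j) (zag j) = j"
  by (auto simp: zig_def zag_def)

lemma zig_zag_last:
  assumes "3 \<le> p"
  shows "zig p \<noteq> 0" and "zag p \<noteq> 1" and "zig p \<le> p" and "zag p \<le> p"
  using assms by (auto simp: zig_def zag_def)

lemma tri_cycle_index_tri_cycle: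
  assumes "3 \<le> p" and "i < 2 * p + 6"
  shows "tri_cycle_index p (tri_cycle p i) = i"
proof -
  consider "i = 0" | "0 < i" "i < 2 * p" "odd i" | "0 < i" "i < 2 * p" "even i" | "2 * p \<le> i"
    by linarith
  then show ?thesis
  proof cases
    case 2
    then have "1 \<le> (i + 1) div 2" by auto
    with 2 show ?thesis
      using max_zig_zag[of "(i + 1) div 2"] by (auto simp: tri_cycle_def)
  next
    case 3
    then show ?thesis by (auto simp: tri_cycle_def zigzag_pair_def)
  next
    case 4
    with assms(2) have "i \<in> {2 * p, 2 * p + 1, 2 * p + 2, 2 * p + 3, 2 * p + 4, 2 * p + 5}"
      by auto
    with zig_zag_last[OF assms(1)] show ?thesis
      by (auto simp: tri_cycle_def)
  qed (simp add: tri_cycle_def)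
qed

lemma tri_points_tri_cycle: "3 \<le> p \<Longrightarrow> tri_points (tri_cycle p i) \<subseteq> {..<3} \<times> {..<p + 3}"
  by (auto simp: tri_cycle_def zigzag_pair_def zig_def zag_def)

lemma tri_adj_zigzag:
  shows "1 \<le> j \<Longrightarrow> tri_adj (Triple (zig j) (zag j) 0) (zigzag_pair j)"
    and "tri_adj (zigzag_pair j) (Triple (zig (Suc j)) (zag (Suc j)) 0)"
  by (auto simp: zigzag_pair_def zig_def zag_def)

lemma tri_adj_tri_cycle:
  assumes "3 \<le> p" and "i < 2 * p + 6"
  shows "tri_adj (tri_cycle p i) (tri_cycle p (Suc i mod (2 * p + 6)))"
proof -
  consider "i = 0" | "0 < i" "i < 2 * p" "odd i" | "0 < i" "i < 2 * p" "even i" | "2 * p \<le> i"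
    by linarith
  then show ?thesis
  proof cases
    case 1
    with assms show ?thesis
      by (auto simp: tri_cycle_def zig_def zag_def)
  next
    case 2
    define j where "j = (i + 1) div 2"
    have j: "i = 2 * j - 1" "1 \<le> j" "j \<le> p" "Suc i mod (2 * p + 6) = 2 * j"
      using 2 unfolding j_def by (auto elim: oddE)
    moreover have "tri_cycle p i = Triple (zig j) (zag j) 0"
      using j 2 by (simp add: tri_cycle_def)
    ultimately show ?thesis
      using tri_adj_zigzag(1)[of j] by (cases "j = p") (simp_all add: tri_cycle_def)
  next
    case 3
    define j where "j = i div 2"
    have j: "i = 2 * j" "1 \<le> j" "j < p"
      using 3 unfolding j_def by (auto elim: evenE)
    then show ?thesis
      using tri_adj_zigzag(2)[of j] by (simp add: tri_cycle_def)
  next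
    case 4
    with assms(2) have "i \<in> {2 * p, 2 * p + 1, 2 * p + 2, 2 * p + 3, 2 * p + 4, 2 * p + 5}"
      by auto
    moreover have "Suc i mod (2 * p + 6) = (if i = 2 * p + 5 then 0 else Suc i)"
      using assms(2) by (auto simp: add.commute)
    ultimately show ?thesis
      using zig_zag_last[OF assms(1)] by (auto simp: tri_cycle_def)
  qed
qed

lemma tri_incidence_cycle:
  assumes "6 \<le> l"
  shows "\<exists>c. inj_on c {..<2 * l} \<and>
    (\<forall>i<2 * l. tri_points (c i) \<subseteq> {..<3} \<times> {..<l} \<and> tri_adj (c i) (c (Suc i mod (2 * l))))"
proof (intro exI conjI allI impI)
  define p where "p = l - 3"
  have p: "3 \<le> p" "2 * l = 2 * p + 6" "l = p + 3"
    using assms unfolding p_def by auto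
  show "inj_on (tri_cycle p) {..<2 * l}"
    by (rule inj_on_inverseI[where g = "tri_cycle_index p"]) (use tri_cycle_index_tri_cycle p in auto)
  fix i assume "i < 2 * l"
  then show "tri_points (tri_cycle p i) \<subseteq> {..<3} \<times> {..<l}"
    and "tri_adj (tri_cycle p i) (tri_cycle p (Suc i mod (2 * l)))"
    using tri_points_tri_cycle tri_adj_tri_cycle p by auto
qed

text \<open>The map \<open>u \<mapsto> F \<union> e ` tri_points u\<close> embeds the incidence graph on coordinates below
  \<open>K\<close> into the graph with edge set \<open>G\<close>.\<close>

definition tri_embedding :: "'a set set set \<Rightarrow> nat \<Rightarrow> 'a set \<Rightarrow> (nat \<times> nat \<Rightarrow> 'a) \<Rightarrow> bool" where
  "tri_embedding G K F e \<longleftrightarrow>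
     inj_on e ({..<3} \<times> {..<K}) \<and> F \<inter> e ` ({..<3} \<times> {..<K}) = {} \<and>
     (\<forall>x<K. \<forall>y<K. \<forall>w<K. \<forall>pt \<in> tri_points (Triple x y w).
        {F \<union> e ` tri_points (Triple x y w), F \<union> e ` (tri_points (Triple x y w) - {pt})} \<in> G)"

lemma tri_embedding_inj:
  assumes "tri_embedding G K F e"
    and "tri_points u \<subseteq> {..<3} \<times> {..<K}" and "tri_points v \<subseteq> {..<3} \<times> {..<K}"
    and "F \<union> e ` tri_points u = F \<union> e ` tri_points v"
  shows "u = v"
proof -
  have inj: "inj_on e ({..<3} \<times> {..<K})" and disj: "F \<inter> e ` ({..<3} \<times> {..<K}) = {}"
    using assms(1) unfolding tri_embedding_def by blast+
  have Un_cancel: "A = B" if "F \<union> A = F \<union> B" "A \<subseteq> E" "B \<subseteq> E" "F \<inter> E = {}" for A B E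
    using that by blast
  have "e ` tri_points u = e ` tri_points v"
    by (rule Un_cancel[OF assms(4) image_mono image_mono disj]) (fact assms(2,3))+
  then have "tri_points u = tri_points v"
    using inj assms(2,3) by (simp add: inj_on_image_eq_iff)
  then show ?thesis
    by (rule tri_points_eqD)
qed

lemma tri_embedding_adj:
  assumes "tri_embedding G K F e" and "tri_adj u v"
    and bounded: "tri_points u \<subseteq> {..<3} \<times> {..<K}" "tri_points v \<subseteq> {..<3} \<times> {..<K}"
  shows "{F \<union> e ` tri_points u, F \<union> e ` tri_points v} \<in> G"
proof -
  obtain x y w pt where pt: "pt \<in> tri_points (Triple x y w)"
    and uv: "{tri_points u, tri_points v} = {tri_points (Triple x y w), tri_points (Triple x y w) - {pt}}"
    using tri_adj_points[OF assms(2)] .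
  have "tri_points (Triple x y w) \<in> {tri_points u, tri_points v}"
    unfolding uv by simp
  then have "x < K" "y < K" "w < K"
    using bounded by auto
  have "{F \<union> e ` tri_points u, F \<union> e ` tri_points v} = (\<lambda>Q. F \<union> e ` Q) ` {tri_points u, tri_points v}"
    by simp
  also have "\<dots> = {F \<union> e ` tri_points (Triple x y w), F \<union> e ` (tri_points (Triple x y w) - {pt})}"
    by (simp only: uv image_insert image_empty)
  also have "\<dots> \<in> G"
    using assms(1) pt \<open>x < K\<close> \<open>y < K\<close> \<open>w < K\<close> unfolding tri_embedding_def by blast
  finally show ?thesis .
qed

lemma tri_embedding_has_cycle:
  assumes "6 \<le> l" and emb: "tri_embedding G l F e"
  shows "has_cycle_of_length G (2 * l)"
proof -
  obtain c where c_inj: "inj_on c {..<2 * l}"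
    and c: "\<And>i. i < 2 * l \<Longrightarrow>
      tri_points (c i) \<subseteq> {..<3} \<times> {..<l} \<and> tri_adj (c i) (c (Suc i mod (2 * l)))"
    using tri_incidence_cycle[OF assms(1)] by blast
  show ?thesis
  proof (rule has_cycle_of_lengthI[where g = "\<lambda>i. F \<union> e ` tri_points (c i)"])
    show "3 \<le> 2 * l"
      using assms(1) by simp
    show "inj_on (\<lambda>i. F \<union> e ` tri_points (c i)) {..<2 * l}"
    proof (rule inj_onI)
      fix i j assume "i \<in> {..<2 * l}" "j \<in> {..<2 * l}" "F \<union> e ` tri_points (c i) = F \<union> e ` tri_points (c j)"
      then show "i = j"
        using c tri_embedding_inj[OF emb] inj_onD[OF c_inj] by simp
    qed
    fix i assume "i < 2 * l"
    moreover have "Suc i mod (2 * l) < 2 * l"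
      using assms(1) by simp
    ultimately show "{F \<union> e ` tri_points (c i), F \<union> e ` tri_points (c (Suc i mod (2 * l)))} \<in> G"
      using c tri_embedding_adj[OF emb] by simp
  qed
qed

section \<open>Embeddings from homogeneous sets\<close>

lemma sorted_list_of_set_image_strict_mono_on:
  assumes "strict_mono_on A h" and "I \<subseteq> A" and "finite I"
  shows "sorted_list_of_set (h ` I) = map h (sorted_list_of_set I)"
proof -
  have "inj_on h I"
    using assms(1,2) strict_mono_on_imp_inj_on inj_on_subset by blast
  moreover have "sorted_wrt (<) (map h (sorted_list_of_set I))"
    unfolding sorted_wrt_map
    by (rule sorted_wrt_mono_rel[OF _ strict_sorted_list_of_set])
      (use assms in \<open>auto simp: strict_mono_on_def\<close>)
  ultimately show ?thesis
    using assms(3) by (subst sorted_list_of_set_unique[symmetric]) (auto simp: card_image)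
qed

lemma strict_mono_on_nth_sorted_list_of_set:
  "strict_mono_on {..<card H} (\<lambda>q. sorted_list_of_set H ! q)"
  by (rule strict_mono_onI) (auto intro: sorted_wrt_nth_less[OF strict_sorted_list_of_set])

lemma nth_sorted_list_of_set_image:
  "finite H \<Longrightarrow> (\<lambda>q. sorted_list_of_set H ! q) ` {..<card H} = H"
  by (metis atLeast0LessThan image_set length_sorted_list_of_set map_nth set_sorted_list_of_set set_upt)

lemma block_index_less: "q < s \<Longrightarrow> v < K \<Longrightarrow> q * K + v < s * (K :: nat)"
proof -
  assume "q < s" "v < K"
  then have "q * K + v < Suc q * K" by simp
  also have "\<dots> \<le> s * K" using \<open>q < s\<close> by (intro mult_right_mono) auto
  finally show ?thesis .
qed

lemma block_index_eq_iff:
  "v < K \<Longrightarrow> v' < K \<Longrightarrow> q * K + v = q' * K + v' \<longleftrightarrow> q = q' \<and> v = (v' :: nat)"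
  by (metis add_cancel_left_left div_mult_self3 mod_less mod_mult_self3 div_less not_less0 add.commute)

lemma block_transversal:
  fixes f :: "nat \<Rightarrow> nat"
  assumes f: "\<And>q. q < s \<Longrightarrow> f q < K"
  defines "I \<equiv> (\<lambda>q. q * K + f q) ` {..<s}"
  shows "I \<subseteq> {..<s * K}" and "card I = s"
    and "\<And>r. r < s \<Longrightarrow> sorted_list_of_set I ! r = r * K + f r"
proof -
  have mono: "strict_mono_on {..<s} (\<lambda>q. q * K + f q)"
  proof (rule strict_mono_onI)
    fix q q' :: nat assume "q \<in> {..<s}" "q' \<in> {..<s}" "q < q'"
    then have "q * K + f q < Suc q * K"
      using block_index_less[of q "Suc q" "f q" K] f by simp
    also have "\<dots> \<le> q' * K + f q'"
      using \<open>q < q'\<close> by (metis Suc_leI mult_le_mono1 trans_le_add1)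
    finally show "q * K + f q < q' * K + f q'" .
  qed
  show "I \<subseteq> {..<s * K}"
    unfolding I_def using block_index_less f by auto
  show "card I = s"
    unfolding I_def using card_image[OF strict_mono_on_imp_inj_on[OF mono]] by simp
  have "sorted_list_of_set I = map (\<lambda>q. q * K + f q) [0..<s]"
    unfolding I_def using sorted_list_of_set_image_strict_mono_on[OF mono order.refl]
    by (simp add: lessThan_atLeast0)
  then show "\<And>r. r < s \<Longrightarrow> sorted_list_of_set I ! r = r * K + f r"
    by simp
qed

definition tri_block_index :: "nat \<Rightarrow> nat \<Rightarrow> nat \<Rightarrow> nat \<Rightarrow> nat \<times> nat \<Rightarrow> nat" where
  "tri_block_index K r1 r2 r3 = (\<lambda>(i, v). [r1, r2, r3] ! i * K + v)"

lemma inj_on_tri_block_index: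
  assumes "distinct [r1, r2, r3]"
  shows "inj_on (tri_block_index K r1 r2 r3) ({..<3} \<times> {..<K})"
  by (rule inj_onI) (auto simp: tri_block_index_def block_index_eq_iff nth_eq_iff_index_eq[OF assms])

lemma tri_block_index_less:
  assumes "{r1, r2, r3} \<subseteq> {..<s}" and "pt \<in> {..<3} \<times> {..<K}"
  shows "tri_block_index K r1 r2 r3 pt < s * K"
proof -
  obtain i v where pt: "pt = (i, v)" "i < 3" "v < K"
    using assms(2) by blast
  then have "[r1, r2, r3] ! i < s"
    using assms(1) nth_mem[of i "[r1, r2, r3]"] by auto
  then show ?thesis
    using pt block_index_less by (simp add: tri_block_index_def)
qed

lemma tri_block_index_neq_block_start:
  assumes "q \<notin> {r1, r2, r3}" and "pt \<in> {..<3} \<times> {..<K}"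
  shows "tri_block_index K r1 r2 r3 pt \<noteq> q * K"
proof
  obtain i v where pt: "pt = (i, v)" "i < 3" "v < K"
    using assms(2) by blast
  assume "tri_block_index K r1 r2 r3 pt = q * K"
  then have "[r1, r2, r3] ! i * K + v = q * K + 0"
    by (simp add: tri_block_index_def pt)
  then have "q = [r1, r2, r3] ! i"
    using block_index_eq_iff[of v K 0] pt by auto
  then show False
    using assms(1) nth_mem[of i "[r1, r2, r3]"] pt by auto
qed

lemma tri_block_transversal:
  fixes x y w :: nat
  assumes r: "distinct [r1, r2, r3]" "{r1, r2, r3} \<subseteq> {..<s}"
  defines "f \<equiv> (\<lambda>_. 0)(r1 := x, r2 := y, r3 := w)"
  shows "(\<lambda>q. q * K + f q) ` {..<s}
      = (\<lambda>q. q * K) ` ({..<s} - {r1, r2, r3}) \<union> tri_block_index K r1 r2 r3 ` tri_points (Triple x y w)"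
    and "pt \<in> tri_points (Triple x y w) \<Longrightarrow> \<exists>r \<in> {r1, r2, r3}. tri_block_index K r1 r2 r3 pt = r * K + f r"
proof -
  have "({..<s} - {r1, r2, r3}) \<union> {r1, r2, r3} = {..<s}"
    using r(2) by auto
  then have "(\<lambda>q. q * K + f q) ` {..<s}
      = (\<lambda>q. q * K + f q) ` ({..<s} - {r1, r2, r3}) \<union> (\<lambda>q. q * K + f q) ` {r1, r2, r3}"
    by (simp only: image_Un[symmetric])
  moreover have "(\<lambda>q. q * K + f q) ` ({..<s} - {r1, r2, r3}) = (\<lambda>q. q * K) ` ({..<s} - {r1, r2, r3})"
    by (rule image_cong) (auto simp: f_def)
  moreover have "(\<lambda>q. q * K + f q) ` {r1, r2, r3} = tri_block_index K r1 r2 r3 ` tri_points (Triple x y w)"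
    using r(1) by (simp add: tri_block_index_def f_def)
  ultimately show "(\<lambda>q. q * K + f q) ` {..<s}
      = (\<lambda>q. q * K) ` ({..<s} - {r1, r2, r3}) \<union> tri_block_index K r1 r2 r3 ` tri_points (Triple x y w)"
    by (simp only:)
  show "pt \<in> tri_points (Triple x y w) \<Longrightarrow> \<exists>r \<in> {r1, r2, r3}. tri_block_index K r1 r2 r3 pt = r * K + f r"
    using r(1) by (auto simp: tri_block_index_def f_def)
qed

lemma Un_image_Diff_singleton:
  assumes "inj_on g D" and "P \<subseteq> D" and "x \<in> P" and "F \<inter> g ` D = {}"
  shows "F \<union> g ` P - {g x} = F \<union> g ` (P - {x})"
proof -
  have "F \<union> g ` P - {g x} = (F - {g x}) \<union> (g ` P - g ` {x})"
    by (simp add: Un_Diff)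
  also have "F - {g x} = F"
    using assms(2-4) by (auto simp: disjoint_iff)
  also have "g ` P - g ` {x} = g ` (P - {x})"
    by (rule inj_on_image_set_diff[OF assms(1), symmetric]) (use assms(2,3) in auto)
  finally show ?thesis .
qed

lemma tri_block_padding_disjoint:
  assumes inj: "inj_on \<gamma> {..<s * K}" and disj: "F \<inter> \<gamma> ` {..<s * K} = {}"
    and r: "{r1, r2, r3} \<subseteq> {..<s}"
  shows "(F \<union> (\<lambda>q. \<gamma> (q * K)) ` ({..<s} - {r1, r2, r3})) \<inter> (\<gamma> \<circ> tri_block_index K r1 r2 r3) ` ({..<3} \<times> {..<K}) = {}"
proof -
  let ?D = "{..<3} \<times> {..<K}" and ?\<iota> = "tri_block_index K r1 r2 r3"
  have \<iota>_range: "?\<iota> ` ?D \<subseteq> {..<s * K}"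
    using tri_block_index_less[OF r] by blast
  have "\<gamma> (?\<iota> pt) \<noteq> \<gamma> (q * K)" if q: "q < s" "q \<notin> {r1, r2, r3}" and pt: "pt \<in> ?D" for q pt
  proof -
    have "q * K + 0 < s * K" "?\<iota> pt < s * K"
      using q pt \<iota>_range block_index_less[of q s 0 K] by auto
    then show ?thesis
      using tri_block_index_neq_block_start[OF q(2) pt] inj by (auto dest: inj_onD)
  qed
  moreover have "F \<inter> \<gamma> ` ?\<iota> ` ?D = {}"
    using disj image_mono[OF \<iota>_range, of \<gamma>] by blast
  ultimately show ?thesis
    by auto
qed

lemma tri_embedding_of_blocks:
  fixes \<gamma> :: "nat \<Rightarrow> 'a"
  assumes inj: "inj_on \<gamma> {..<s * K}" and disj: "F \<inter> \<gamma> ` {..<s * K} = {}"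
    and r: "distinct [r1, r2, r3]" "{r1, r2, r3} \<subseteq> {..<s}"
    and hom: "\<And>I r. I \<subseteq> {..<s * K} \<Longrightarrow> card I = s \<Longrightarrow> r \<in> {r1, r2, r3} \<Longrightarrow>
      {F \<union> \<gamma> ` I, F \<union> \<gamma> ` I - {\<gamma> (sorted_list_of_set I ! r)}} \<in> G"
  shows "tri_embedding G K (F \<union> (\<lambda>q. \<gamma> (q * K)) ` ({..<s} - {r1, r2, r3}))
    (\<gamma> \<circ> tri_block_index K r1 r2 r3)"
proof -
  let ?D = "{..<3} \<times> {..<K}" and ?\<iota> = "tri_block_index K r1 r2 r3"
  define F' where "F' = F \<union> (\<lambda>q. \<gamma> (q * K)) ` ({..<s} - {r1, r2, r3})"
  have e_inj: "inj_on (\<gamma> \<circ> ?\<iota>) ?D"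
    using tri_block_index_less[OF r(2)]
    by (intro comp_inj_on inj_on_tri_block_index[OF r(1)] inj_on_subset[OF inj]) blast
  have e_disj: "F' \<inter> (\<gamma> \<circ> ?\<iota>) ` ?D = {}"
    unfolding F'_def by (rule tri_block_padding_disjoint[OF inj disj r(2)])
  have edges: "{F' \<union> (\<gamma> \<circ> ?\<iota>) ` P, F' \<union> (\<gamma> \<circ> ?\<iota>) ` (P - {pt})} \<in> G"
    if xyw: "x < K" "y < K" "w < K" and P: "P = tri_points (Triple x y w)" and pt: "pt \<in> P"
    for x y w P pt
  proof -
    define f where "f = (\<lambda>_. 0)(r1 := x, r2 := y, r3 := w)"
    define I where "I = (\<lambda>q. q * K + f q) ` {..<s}"
    have I: "I \<subseteq> {..<s * K}" "card I = s" "\<And>r. r < s \<Longrightarrow> sorted_list_of_set I ! r = r * K + f r"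
      using block_transversal[of s f K] xyw unfolding I_def f_def by auto
    have base: "F \<union> \<gamma> ` I = F' \<union> (\<gamma> \<circ> ?\<iota>) ` P"
      using tri_block_transversal(1)[OF r, where K = K and x = x and y = y and w = w]
      unfolding I_def F'_def f_def P by (simp add: image_Un image_comp Un_assoc)
    obtain r where r_mem: "r \<in> {r1, r2, r3}" and "?\<iota> pt = r * K + f r"
      using tri_block_transversal(2)[OF r, where K = K and x = x and y = y and w = w and pt = pt] pt
      unfolding P f_def by blast
    then have removed: "\<gamma> (sorted_list_of_set I ! r) = (\<gamma> \<circ> ?\<iota>) pt"
      using I(3) r(2) by auto
    have diff: "F' \<union> (\<gamma> \<circ> ?\<iota>) ` P - {(\<gamma> \<circ> ?\<iota>) pt} = F' \<union> (\<gamma> \<circ> ?\<iota>) ` (P - {pt})"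
      by (rule Un_image_Diff_singleton[OF e_inj _ pt e_disj]) (use xyw P in auto)
    show ?thesis
      using hom[OF I(1,2) r_mem] unfolding base removed diff .
  qed
  show ?thesis
    unfolding tri_embedding_def F'_def[symmetric]
    using e_inj e_disj edges by blast
qed

lemma tri_embedding_of_homogeneous:
  fixes \<beta> :: "nat \<Rightarrow> 'a"
  assumes H: "finite H" "card H = s * K" and \<beta>: "inj_on \<beta> H" "F \<inter> \<beta> ` H = {}"
    and r: "distinct [r1, r2, r3]" "{r1, r2, r3} \<subseteq> {..<s}"
    and hom: "\<And>Y r. Y \<subseteq> H \<Longrightarrow> card Y = s \<Longrightarrow> r \<in> {r1, r2, r3} \<Longrightarrow>
      {F \<union> \<beta> ` Y, F \<union> \<beta> ` Y - {\<beta> (sorted_list_of_set Y ! r)}} \<in> G"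
  shows "\<exists>F' e. tri_embedding G K F' e"
proof -
  define h where "h q = sorted_list_of_set H ! q" for q
  have h_mono: "strict_mono_on {..<s * K} h"
    using strict_mono_on_nth_sorted_list_of_set[of H] H unfolding h_def by simp
  have h_range: "h ` {..<s * K} = H"
    using nth_sorted_list_of_set_image[OF H(1)] H unfolding h_def by simp
  have "tri_embedding G K (F \<union> (\<lambda>q. (\<beta> \<circ> h) (q * K)) ` ({..<s} - {r1, r2, r3}))
    ((\<beta> \<circ> h) \<circ> tri_block_index K r1 r2 r3)"
  proof (rule tri_embedding_of_blocks[OF _ _ r])
    show "inj_on (\<beta> \<circ> h) {..<s * K}"
      using strict_mono_on_imp_inj_on[OF h_mono] \<beta>(1) h_range by (simp add: comp_inj_on)
    show "F \<inter> (\<beta> \<circ> h) ` {..<s * K} = {}"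
      unfolding image_comp[symmetric] h_range by (fact \<beta>(2))
    fix I r assume I: "I \<subseteq> {..<s * K}" "card I = s" and "r \<in> {r1, r2, r3}"
    have "finite I"
      using I(1) finite_subset by blast
    have "inj_on h I"
      using strict_mono_on_imp_inj_on[OF h_mono] I(1) inj_on_subset by blast
    then have Y: "h ` I \<subseteq> H" "card (h ` I) = s"
      using I h_range by (auto simp: card_image)
    have "r < s" "length (sorted_list_of_set I) = s"
      using \<open>r \<in> {r1, r2, r3}\<close> r I(2) by auto
    then have "sorted_list_of_set (h ` I) ! r = h (sorted_list_of_set I ! r)"
      using sorted_list_of_set_image_strict_mono_on[OF h_mono I(1) \<open>finite I\<close>] by simp
    then show "{F \<union> (\<beta> \<circ> h) ` I, F \<union> (\<beta> \<circ> h) ` I - {(\<beta> \<circ> h) (sorted_list_of_set I ! r)}} \<in> G"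
      using hom[OF Y \<open>r \<in> {r1, r2, r3}\<close>] by (simp add: image_comp)
  qed
  then show ?thesis
    by blast
qed

section \<open>Ramsey's theorem for colourings of positions\<close>

lemma ramsey_finite_colours:
  assumes "finite C"
  obtains N :: nat where "\<And>f. f \<in> nsets {..<N} r \<rightarrow> C \<Longrightarrow>
    \<exists>H c. H \<in> nsets {..<N} m \<and> c \<in> C \<and> f ` nsets H r \<subseteq> {c}"
proof -
  obtain N :: nat where N: "partn_lst {..<N} (replicate (card C) m) r"
    using ramsey_full by blast
  obtain code where code: "bij_betw code C {0..<card C}"
    using ex_bij_betw_finite_nat[OF assms] by blast
  show thesis
  proof (rule that)
    fix f assume f: "f \<in> nsets {..<N} r \<rightarrow> C"
    then have "code \<circ> f \<in> nsets {..<N} r \<rightarrow> {..<card C}"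
      using bij_betwE[OF code] by auto
    then obtain i H where i: "i < length (replicate (card C) m)"
      and H: "H \<in> nsets {..<N} (replicate (card C) m ! i)" and hom: "(code \<circ> f) ` nsets H r \<subseteq> {i}"
      by (rule partn_lstE[OF N]) simp
    have "f Y = inv_into C code i" if "Y \<in> nsets H r" for Y
    proof -
      have "H \<subseteq> {..<N}"
        using H by (simp add: nsets_def)
      then have "f Y \<in> C"
        using f that nsets_mono by blast
      moreover have "code (f Y) = i"
        using hom that by auto
      ultimately show ?thesis
        using inv_into_f_f[OF bij_betw_imp_inj_on[OF code]] by metis
    qed
    moreover have "inv_into C code i \<in> C"
      using code i by (simp add: bij_betw_def inv_into_into)
    ultimately show "\<exists>H c. H \<in> nsets {..<N} m \<and> c \<in> C \<and> f ` nsets H r \<subseteq> {c}"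
      using H i by auto
  qed
qed

lemma ramsey_indexed_colours:
  obtains N :: nat where "\<And>\<chi>. (\<And>Y i. Y \<in> nsets {..<N} s \<Longrightarrow> i < s \<Longrightarrow> \<chi> Y i < t) \<Longrightarrow>
    \<exists>H g. H \<in> nsets {..<N} m \<and> (\<forall>i<s. g i < (t::nat)) \<and> (\<forall>Y \<in> nsets H s. \<forall>i<s. \<chi> Y i = g i)"
proof -
  obtain N :: nat where N: "\<And>f. f \<in> nsets {..<N} s \<rightarrow> {..<s} \<rightarrow>\<^sub>E {..<t} \<Longrightarrow>
      \<exists>H c. H \<in> nsets {..<N} m \<and> c \<in> {..<s} \<rightarrow>\<^sub>E {..<t} \<and> f ` nsets H s \<subseteq> {c}"
    using ramsey_finite_colours[of "{..<s} \<rightarrow>\<^sub>E {..<t}"] by (metis finite_PiE finite_lessThan)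
  show thesis
  proof (rule that)
    fix \<chi> :: "nat set \<Rightarrow> nat \<Rightarrow> nat"
    assume "\<And>Y i. Y \<in> nsets {..<N} s \<Longrightarrow> i < s \<Longrightarrow> \<chi> Y i < t"
    then have "(\<lambda>Y. restrict (\<chi> Y) {..<s}) \<in> nsets {..<N} s \<rightarrow> {..<s} \<rightarrow>\<^sub>E {..<t}"
      by auto
    then obtain H g where "H \<in> nsets {..<N} m" "g \<in> {..<s} \<rightarrow>\<^sub>E {..<t}"
      and hom: "(\<lambda>Y. restrict (\<chi> Y) {..<s}) ` nsets H s \<subseteq> {g}"
      using N by blast
    moreover have "\<chi> Y i = g i" if "Y \<in> nsets H s" "i < s" for Y i
      using hom that by (metis (no_types, lifting) image_subset_iff lessThan_iff restrict_apply' singletonD)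
    ultimately show "\<exists>H g. H \<in> nsets {..<N} m \<and> (\<forall>i<s. g i < t) \<and> (\<forall>Y \<in> nsets H s. \<forall>i<s. \<chi> Y i = g i)"
      by blast
  qed
qed

lemma pigeonhole_three:
  assumes "\<And>r. r < 2 * t + 1 \<Longrightarrow> g r < (t::nat)"
  obtains r1 r2 r3 where "distinct [r1, r2, r3]" and "{r1, r2, r3} \<subseteq> {..<2 * t + 1}"
    and "g r2 = g r1" and "g r3 = g r1"
proof -
  let ?A = "{..<2 * t + 1}"
  have "0 < t"
    using assms[of 0] by simp
  then obtain j where fibre: "2 * t + 1 \<le> card (g -` {j} \<inter> ?A) * t"
    using pigeonhole_card[of g ?A "{..<t}"] assms by auto
  have "3 \<le> card (g -` {j} \<inter> ?A)"
  proof (rule ccontr)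
    assume "\<not> ?thesis"
    then have "card (g -` {j} \<inter> ?A) * t \<le> 2 * t"
      by (intro mult_right_mono) auto
    with fibre show False
      by linarith
  qed
  then obtain R where R: "R \<subseteq> g -` {j} \<inter> ?A" and "card R = 3"
    by (rule obtain_subset_with_card_n)
  then obtain a b c where abc: "R = {a, b, c}" "a \<noteq> b" "b \<noteq> c" "a \<noteq> c"
    by (metis card_3_iff)
  have "a \<in> g -` {j} \<inter> ?A" "b \<in> g -` {j} \<inter> ?A" "c \<in> g -` {j} \<inter> ?A"
    using R abc(1) by auto
  with abc(2-4) show thesis
    by (intro that[of a b c]) auto
qed

lemma ramsey_three_equal_positions:
  fixes t m :: nat
  obtains N :: nat where "\<And>\<chi>. (\<And>Y i. Y \<in> nsets {..<N} (2 * t + 1) \<Longrightarrow> i < 2 * t + 1 \<Longrightarrow> \<chi> Y i < t) \<Longrightarrow>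
    \<exists>H j r1 r2 r3. H \<in> nsets {..<N} m \<and> j < t \<and> distinct [r1, r2, r3] \<and> {r1, r2, r3} \<subseteq> {..<2 * t + 1} \<and>
      (\<forall>Y \<in> nsets H (2 * t + 1). \<forall>r \<in> {r1, r2, r3}. \<chi> Y r = j)"
proof -
  obtain N :: nat where N: "\<And>\<chi>. (\<And>Y i. Y \<in> nsets {..<N} (2 * t + 1) \<Longrightarrow> i < 2 * t + 1 \<Longrightarrow> \<chi> Y i < t) \<Longrightarrow>
      \<exists>H g. H \<in> nsets {..<N} m \<and> (\<forall>i<2 * t + 1. g i < t) \<and>
        (\<forall>Y \<in> nsets H (2 * t + 1). \<forall>i<2 * t + 1. \<chi> Y i = g i)"
    using ramsey_indexed_colours[where s = "2 * t + 1" and t = t and m = m] by blast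
  show thesis
  proof (rule that)
    fix \<chi> :: "nat set \<Rightarrow> nat \<Rightarrow> nat"
    assume "\<And>Y i. Y \<in> nsets {..<N} (2 * t + 1) \<Longrightarrow> i < 2 * t + 1 \<Longrightarrow> \<chi> Y i < t"
    then obtain H g where H: "H \<in> nsets {..<N} m" and g: "\<forall>i<2 * t + 1. g i < t"
      and hom: "\<forall>Y \<in> nsets H (2 * t + 1). \<forall>i<2 * t + 1. \<chi> Y i = g i"
      using N by blast
    obtain r1 r2 r3 where r: "distinct [r1, r2, r3]" "{r1, r2, r3} \<subseteq> {..<2 * t + 1}"
      and gr: "g r2 = g r1" "g r3 = g r1"
      using pigeonhole_three[of t g] g by blast
    have "\<forall>Y \<in> nsets H (2 * t + 1). \<forall>r \<in> {r1, r2, r3}. \<chi> Y r = g r1"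
      using hom r(2) gr by auto
    moreover have "g r1 < t"
      using g r(2) by auto
    ultimately show "\<exists>H j r1 r2 r3. H \<in> nsets {..<N} m \<and> j < t \<and> distinct [r1, r2, r3] \<and>
        {r1, r2, r3} \<subseteq> {..<2 * t + 1} \<and> (\<forall>Y \<in> nsets H (2 * t + 1). \<forall>r \<in> {r1, r2, r3}. \<chi> Y r = j)"
      using H r by blast
  qed
qed

section \<open>The doubled Odd graph\<close>

lemma doubled_odd_edge_remove:
  assumes "B \<subseteq> {1..2 * k + 1}" and "card B = k + 1" and "b \<in> B"
  shows "{B, B - {b}} \<in> doubled_odd_edges k"
proof -
  have "finite B"
    using assms(1) finite_subset by blast
  then have "card (B - {b}) = k" and "B - {b} \<subset> B"
    using assms(2,3) by auto
  moreover have "B - {b} \<subseteq> {1..2 * k + 1}"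
    using assms(1) by blast
  ultimately show ?thesis
    unfolding doubled_odd_edges_def dj_edges_def
    by (intro CollectI exI[of _ "B - {b}"] exI[of _ B] conjI insert_commute assms(1,2))
qed

lemma doubled_odd_edge_padded:
  assumes "Y \<subseteq> {..<N}" and "card Y = s" and "N + s \<le> k" and "y \<in> Y"
  defines "F \<equiv> {Suc N..<Suc N + (k + 1 - s)}"
  shows "{F \<union> Suc ` Y, F \<union> Suc ` Y - {Suc y}} \<in> doubled_odd_edges k"
proof (rule doubled_odd_edge_remove)
  have "finite Y"
    using assms(1) finite_subset by blast
  show "F \<union> Suc ` Y \<subseteq> {1..2 * k + 1}"
    using assms(1,3) unfolding F_def by auto
  have "F \<inter> Suc ` Y = {}"
    using assms(1) unfolding F_def by auto
  then show "card (F \<union> Suc ` Y) = k + 1"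
    using \<open>finite Y\<close> assms(2,3) unfolding F_def by (simp add: card_Un_disjoint card_image)
  show "Suc y \<in> F \<union> Suc ` Y"
    using assms(4) by simp
qed

lemma monochromatic_tri_embedding:
  fixes t K :: nat
  obtains k0 where "\<And>k c. k0 \<le> k \<Longrightarrow> (\<forall>E\<in>doubled_odd_edges k. c E < t) \<Longrightarrow>
    \<exists>j<t. \<exists>F e. tri_embedding {E \<in> doubled_odd_edges k. c E = j} K F e"
proof -
  define s where "s = 2 * t + 1"
  obtain N :: nat where N: "\<And>\<chi>. (\<And>Y i. Y \<in> nsets {..<N} s \<Longrightarrow> i < s \<Longrightarrow> \<chi> Y i < t) \<Longrightarrow>
      \<exists>H j r1 r2 r3. H \<in> nsets {..<N} (s * K) \<and> j < t \<and> distinct [r1, r2, r3] \<and> {r1, r2, r3} \<subseteq> {..<s} \<and>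
        (\<forall>Y \<in> nsets H s. \<forall>r \<in> {r1, r2, r3}. \<chi> Y r = j)"
    using ramsey_three_equal_positions[where t = t and m = "s * K"] unfolding s_def by blast
  show thesis
  proof (rule that[of "N + s"])
    fix k and c :: "nat set set \<Rightarrow> nat"
    assume k: "N + s \<le> k" and col: "\<forall>E\<in>doubled_odd_edges k. c E < t"
    define F where "F = {Suc N..<Suc N + (k + 1 - s)}"
    define \<chi> where "\<chi> Y r = c {F \<union> Suc ` Y, F \<union> Suc ` Y - {Suc (sorted_list_of_set Y ! r)}}" for Y r
    have edge: "{F \<union> Suc ` Y, F \<union> Suc ` Y - {Suc (sorted_list_of_set Y ! r)}} \<in> doubled_odd_edges k"
      if Y: "Y \<in> nsets {..<N} s" and "r < s" for Y r
    proof -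
      have "Y \<subseteq> {..<N}" "finite Y" "card Y = s"
        using Y by (auto simp: nsets_def)
      then have "sorted_list_of_set Y ! r \<in> Y"
        using \<open>r < s\<close> by (metis length_sorted_list_of_set nth_mem set_sorted_list_of_set)
      then show ?thesis
        using doubled_odd_edge_padded[OF \<open>Y \<subseteq> {..<N}\<close> \<open>card Y = s\<close> k] unfolding F_def by blast
    qed
    have "\<chi> Y r < t" if "Y \<in> nsets {..<N} s" "r < s" for Y r
      using col edge[OF that] unfolding \<chi>_def by blast
    then have "\<exists>H j r1 r2 r3. H \<in> nsets {..<N} (s * K) \<and> j < t \<and> distinct [r1, r2, r3] \<and>
        {r1, r2, r3} \<subseteq> {..<s} \<and> (\<forall>Y \<in> nsets H s. \<forall>r \<in> {r1, r2, r3}. \<chi> Y r = j)"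
      by (rule N)
    then obtain H j r1 r2 r3 where H: "H \<in> nsets {..<N} (s * K)" and "j < t"
      and r: "distinct [r1, r2, r3]" "{r1, r2, r3} \<subseteq> {..<s}"
      and hom: "\<forall>Y \<in> nsets H s. \<forall>r \<in> {r1, r2, r3}. \<chi> Y r = j"
      by (elim exE conjE)
    then have H: "H \<subseteq> {..<N}" "finite H" "card H = s * K"
      by (auto simp: nsets_def)
    have "\<exists>F' e. tri_embedding {E \<in> doubled_odd_edges k. c E = j} K F' e"
    proof (rule tri_embedding_of_homogeneous[OF H(2,3) _ _ r])
      show "inj_on Suc H"
        by simp
      show "F \<inter> Suc ` H = {}"
        using H(1) unfolding F_def by auto
      fix Y r assume Y: "Y \<subseteq> H" "card Y = s" and "r \<in> {r1, r2, r3}"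
      then have "Y \<in> nsets H s" "Y \<in> nsets {..<N} s" "r < s"
        using H r finite_subset by (auto simp: nsets_def)
      then show "{F \<union> Suc ` Y, F \<union> Suc ` Y - {Suc (sorted_list_of_set Y ! r)}}
          \<in> {E \<in> doubled_odd_edges k. c E = j}"
        using edge hom \<open>r \<in> {r1, r2, r3}\<close> unfolding \<chi>_def by auto
    qed
    then show "\<exists>j<t. \<exists>F e. tri_embedding {E \<in> doubled_odd_edges k. c E = j} K F e"
      using \<open>j < t\<close> by blast
  qed
qed

theorem theorem1p3:
  fixes t l :: nat
  assumes "t > 0" and "l \<ge> 6"
  shows "\<exists>k0. \<forall>k\<ge>k0. \<forall>c :: nat set set \<Rightarrow> nat.
           (\<forall>e\<in>doubled_odd_edges k. c e < t) \<longrightarrow>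
           (\<exists>j<t. has_cycle_of_length {e \<in> doubled_odd_edges k. c e = j} (2 * l))"
proof -
  obtain k0 where k0: "\<And>k c. k0 \<le> k \<Longrightarrow> (\<forall>e\<in>doubled_odd_edges k. c e < t) \<Longrightarrow>
      \<exists>j<t. \<exists>F e. tri_embedding {e \<in> doubled_odd_edges k. c e = j} l F e"
    using monochromatic_tri_embedding[where t = t and K = l] by blast
  have "\<exists>j<t. has_cycle_of_length {e \<in> doubled_odd_edges k. c e = j} (2 * l)"
    if "k0 \<le> k" and "\<forall>e\<in>doubled_odd_edges k. c e < t" for k and c :: "nat set set \<Rightarrow> nat"
    using k0[OF that] tri_embedding_has_cycle[OF assms(2)] by blast
  then show ?thesis
    by blast
qed

end
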